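(* Let $\rho\ge 0$ and let $t=(\sqrt{1+8\rho}-1)/(2\rho)$ if $\rho>0$ and $t=2$ if $\rho=0$. Consider the two-dimensional Poisson regression model with interaction at $\boldsymbol{\beta}=(0,-1,-1,-\rho)^\top$ on $\mathcal{X}=[0,\infty)^2$, and let $\xi_t$ be the design assigning equal weights $1/4$ to $(0,0)$, $(2,0)$, $(0,2)$ and $(t,t)$. Then $d((x,x);\xi_t)\le 0$ for all $x\ge 0$.
   Context: In the model, an observation at setting $\mathbf{x}=(x_1,x_2)$ is Poisson distributed with mean $\lambda(\mathbf{x})=\exp(\mathbf{f}(\mathbf{x})^\top\boldsymbol{\beta})=\exp(-x_1-x_2-\rho x_1x_2)$, where $\mathbf{f}(\mathbf{x})=(1,x_1,x_2,x_1x_2)^\top$. For a design $\xi$ with settings $\mathbf{x}_i$ and weights $w_i$ (nonnegative, summing to $1$), the information matrix is $\mathbf{M}(\xi)=\sum_i w_i\lambda(\mathbf{x}_i)\mathbf{f}(\mathbf{x}_i)\mathbf{f}(\mathbf{x}_i)^\top$, and the deduced sensitivity function is $d(\mathbf{x};\xi)=\mathbf{f}(\mathbf{x})^\top\mathbf{M}(\xi)^{-1}\mathbf{f}(\mathbf{x})/p-1/\lambda(\mathbf{x})$ with $p=4$. *)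

theory Defs
  imports "HOL-Analysis.Analysis"
begin

definition regf :: "real \<times> real \<Rightarrow> real ^ 4" where
  "regf x = vector [1, fst x, snd x, fst x * snd x]"

text \<open>Intensity lambda(x) = exp(-x1 - x2 - rho x1 x2), i.e. beta = (0,-1,-1,-rho).\<close>
definition intensity :: "real \<Rightarrow> real \<times> real \<Rightarrow> real" where
  "intensity \<rho> x = exp (- fst x - snd x - \<rho> * fst x * snd x)"

text \<open>A (finite) design: list of (setting, weight) pairs.
  Information matrix M(xi) = sum_i w_i lambda(x_i) f(x_i) f(x_i)^T.\<close>
definition info_matrix :: "real \<Rightarrow> ((real \<times> real) \<times> real) list \<Rightarrow> real ^ 4 ^ 4" where
  "info_matrix \<rho> \<xi> =
     sum_list (map (\<lambda>(x, w). (w * intensity \<rho> x) *\<^sub>R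
        (\<chi> i j. regf x $ i * regf x $ j)) \<xi>)"

text \<open>Deduced sensitivity function with p = 4.\<close>
definition sensitivity :: "real \<Rightarrow> ((real \<times> real) \<times> real) list \<Rightarrow> real \<times> real \<Rightarrow> real" where
  "sensitivity \<rho> \<xi> x =
     (regf x \<bullet> (matrix_inv (info_matrix \<rho> \<xi>) *v regf x)) / 4 - 1 / intensity \<rho> x"

definition t_rho :: "real \<Rightarrow> real" where
  "t_rho \<rho> = (if \<rho> > 0 then (sqrt (1 + 8 * \<rho>) - 1) / (2 * \<rho>) else 2)"

definition design_t :: "real \<Rightarrow> ((real \<times> real) \<times> real) list" where
  "design_t t = [((0,0), 1/4), ((2,0), 1/4), ((0,2), 1/4), ((t,t), 1/4)]"

end

theory Submission
  imports Defs
begin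

text \<open>
  The design is saturated: the regression vectors f_i of its four support points form a basis
  of R^4. With the dual basis g_i, i.e. the coefficient vectors of the Lagrange polynomials
  l_i = g_i . f of the design, the information matrix inverts to 4 Sum_i g_i g_i^T / lambda(x_i),
  so d(x) = Sum_i l_i(x)^2 / lambda(x_i) - 1 / lambda(x).
  On the diagonal x = (t s, t s) the relation rho t^2 + t = 2 eliminates rho, and d <= 0 becomes
    ((1 - s)(1 + s - t s))^2 + e^2 (t s (1 - s))^2 / 2 + e^(t+2) s^4 <= exp ((2 - t) s^2 + 2 t s)
  for s >= 0 and 0 <= t <= 2.
  For s <= 1/2 bound the right side below by its cubic Taylor polynomial and e^t above by its
  chord on [0, 2]; for s >= 1/2 expand the exponent around s = 1 as
  (t + 2) + 4 (s - 1) + (2 - t) (s - 1)^2. Either way a polynomial inequality on a box remains,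
  certified by an expansion with positive coefficients in products of powers of the nonnegative
  quantities s, 1 - 2 s (resp. s - 1/2), t and 2 - t.
\<close>

definition outer_prod :: "real^'n \<Rightarrow> real^'m \<Rightarrow> real^'m^'n" where
  "outer_prod a b = (\<chi> i j. a $ i * b $ j)"

lemma matrix_mul_outer_prod_sums:
  fixes f :: "'i \<Rightarrow> real^'n" and g :: "'j \<Rightarrow> real^'n"
  shows "(\<Sum>i\<in>I. c i *\<^sub>R outer_prod (f i) (f i)) ** (\<Sum>j\<in>J. d j *\<^sub>R outer_prod (g j) (g j))
       = (\<Sum>i\<in>I. \<Sum>j\<in>J. (c i * d j * (f i \<bullet> g j)) *\<^sub>R outer_prod (f i) (g j))"
proof -
  have "(\<Sum>m\<in>UNIV. (\<Sum>i\<in>I. c i * (f i $ k * f i $ m)) * (\<Sum>j\<in>J. d j * (g j $ m * g j $ l)))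
      = (\<Sum>i\<in>I. \<Sum>j\<in>J. c i * d j * (\<Sum>m\<in>UNIV. f i $ m * g j $ m) * (f i $ k * g j $ l))" for k l
    by (simp add: sum_product sum_distrib_left sum_distrib_right sum.swap[of _ UNIV] mult_ac)
      (intro sum.cong refl sum.swap)
  then show ?thesis
    by (simp add: vec_eq_iff matrix_matrix_mult_def outer_prod_def inner_vec_def)
qed

lemma sum_outer_prod_dual_basis:
  fixes f g :: "'n::finite \<Rightarrow> real^'n"
  assumes "\<And>i j. g i \<bullet> f j = (if i = j then 1 else 0)"
  shows "(\<Sum>i\<in>UNIV. outer_prod (f i) (g i)) = mat 1"
proof -
  have "(\<chi> i. g i) ** transpose (\<chi> j. f j) = mat 1"
    using assms by (simp add: vec_eq_iff matrix_matrix_mult_def transpose_def inner_vec_def mat_def)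
  then have "transpose (\<chi> j. f j) ** (\<chi> i. g i) = mat 1"
    using matrix_left_right_inverse by blast
  then show ?thesis
    by (simp add: vec_eq_iff matrix_matrix_mult_def transpose_def outer_prod_def)
qed

lemma matrix_inv_eqI:
  fixes A B :: "'a::field^'n^'n"
  assumes "A ** B = mat 1"
  shows "matrix_inv A = B"
proof -
  have "B ** A = mat 1"
    using assms matrix_left_right_inverse by blast
  then have "\<exists>A'. A ** A' = mat 1 \<and> A' ** A = mat 1"
    using assms by blast
  then have "matrix_inv A ** A = mat 1"
    unfolding matrix_inv_def by (rule someI2_ex) simp
  have "matrix_inv A = matrix_inv A ** (A ** B)"
    using assms by simp
  also have "\<dots> = (matrix_inv A ** A) ** B"
    by (rule matrix_mul_assoc)
  also have "\<dots> = B"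
    using \<open>matrix_inv A ** A = mat 1\<close> by simp
  finally show ?thesis .
qed

lemma matrix_inv_outer_prod_sum:
  fixes f g :: "'n::finite \<Rightarrow> real^'n"
  assumes dual: "\<And>i j. g i \<bullet> f j = (if i = j then 1 else 0)" and c: "\<And>i. c i \<noteq> 0"
  shows "matrix_inv (\<Sum>i\<in>UNIV. c i *\<^sub>R outer_prod (f i) (f i))
       = (\<Sum>i\<in>UNIV. inverse (c i) *\<^sub>R outer_prod (g i) (g i))"
proof -
  have "(\<Sum>i\<in>UNIV. c i *\<^sub>R outer_prod (f i) (f i)) ** (\<Sum>i\<in>UNIV. inverse (c i) *\<^sub>R outer_prod (g i) (g i))
      = (\<Sum>i\<in>UNIV. \<Sum>j\<in>UNIV. (c i * inverse (c j) * (f i \<bullet> g j)) *\<^sub>R outer_prod (f i) (g j))"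
    (is "?M ** ?N = _")
    by (rule matrix_mul_outer_prod_sums)
  also have "\<dots> = (\<Sum>i\<in>UNIV. \<Sum>j\<in>UNIV. if j = i then outer_prod (f i) (g j) else 0)"
    using dual c by (intro sum.cong refl) (simp add: inner_commute[of "f _"])
  also have "\<dots> = (\<Sum>i\<in>UNIV. outer_prod (f i) (g i))"
    by simp
  also have "\<dots> = mat 1"
    using dual by (rule sum_outer_prod_dual_basis)
  finally show ?thesis
    by (rule matrix_inv_eqI)
qed

lemma inner_outer_prod_sum_mult:
  fixes g :: "'i \<Rightarrow> real^'n"
  shows "y \<bullet> ((\<Sum>i\<in>I. c i *\<^sub>R outer_prod (g i) (g i)) *v y) = (\<Sum>i\<in>I. c i * (g i \<bullet> y)^2)"
  by (simp add: inner_vec_def matrix_vector_mult_def outer_prod_def power2_eq_square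
      sum_distrib_left sum_distrib_right sum.swap[of _ I] mult_ac)

lemma vector_4 [simp]:
  "(vector [x, y, z, w] :: 'a::zero^4) $ 1 = x"
  "(vector [x, y, z, w] :: 'a::zero^4) $ 2 = y"
  "(vector [x, y, z, w] :: 'a::zero^4) $ 3 = z"
  "(vector [x, y, z, w] :: 'a::zero^4) $ 4 = w"
  unfolding vector_def by simp_all

lemma sensitivity_saturated_design:
  fixes a :: "4 \<Rightarrow> real \<times> real" and w :: "4 \<Rightarrow> real" and g :: "4 \<Rightarrow> real^4"
  assumes dual: "\<And>i j. g i \<bullet> regf (a j) = (if i = j then 1 else 0)" and w: "\<And>i. 0 < w i"
  shows "sensitivity \<rho> [(a 1, w 1), (a 2, w 2), (a 3, w 3), (a 4, w 4)] x
       = (\<Sum>i\<in>UNIV. (g i \<bullet> regf x)^2 / (w i * intensity \<rho> (a i))) / 4 - 1 / intensity \<rho> x"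
proof -
  have "info_matrix \<rho> [(a 1, w 1), (a 2, w 2), (a 3, w 3), (a 4, w 4)]
      = (\<Sum>i\<in>UNIV. (w i * intensity \<rho> (a i)) *\<^sub>R outer_prod (regf (a i)) (regf (a i)))"
    by (simp add: info_matrix_def sum_4 outer_prod_def)
  moreover have "w i * intensity \<rho> (a i) \<noteq> 0" for i
    using w[of i] by (simp add: intensity_def)
  ultimately have "matrix_inv (info_matrix \<rho> [(a 1, w 1), (a 2, w 2), (a 3, w 3), (a 4, w 4)])
      = (\<Sum>i\<in>UNIV. inverse (w i * intensity \<rho> (a i)) *\<^sub>R outer_prod (g i) (g i))"
    using matrix_inv_outer_prod_sum[OF dual] by simp
  then have "regf x \<bullet> (matrix_inv (info_matrix \<rho> [(a 1, w 1), (a 2, w 2), (a 3, w 3), (a 4, w 4)])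
        *v regf x)
      = (\<Sum>i\<in>UNIV. inverse (w i * intensity \<rho> (a i)) * (g i \<bullet> regf x)^2)"
    by (simp only: inner_outer_prod_sum_mult)
  also have "\<dots> = (\<Sum>i\<in>UNIV. (g i \<bullet> regf x)^2 / (w i * intensity \<rho> (a i)))"
    by (simp only: divide_inverse_commute)
  finally show ?thesis
    unfolding sensitivity_def by (rule arg_cong[where f = "\<lambda>q. q / 4 - _"])
qed

definition design_t_points :: "real \<Rightarrow> 4 \<Rightarrow> real \<times> real" where
  "design_t_points t = ($) (vector [(0, 0), (2, 0), (0, 2), (t, t)])"

definition design_t_lagrange :: "real \<Rightarrow> 4 \<Rightarrow> real^4" where
  "design_t_lagrange t = ($) (vector
     [vector [1, -1/2, -1/2, (t - 1) / t^2],
      vector [0, 1/2, 0, -1 / (2 * t)],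
      vector [0, 0, 1/2, -1 / (2 * t)],
      vector [0, 0, 0, 1 / t^2]])"

lemma design_t_lagrange_dual:
  assumes "t \<noteq> 0"
  shows "design_t_lagrange t i \<bullet> regf (design_t_points t j) = (if i = j then 1 else 0)"
proof -
  have "\<forall>i j. design_t_lagrange t i \<bullet> regf (design_t_points t j) = (if i = j then 1 else 0)"
    using assms unfolding forall_4
    by (simp add: design_t_lagrange_def design_t_points_def regf_def inner_vec_def sum_4
        field_simps power2_eq_square)
  then show ?thesis
    by blast
qed

lemma design_t_eq:
  "design_t t = [(design_t_points t 1, 1/4), (design_t_points t 2, 1/4),
                 (design_t_points t 3, 1/4), (design_t_points t 4, 1/4)]"
  by (simp add: design_t_def design_t_points_def)

lemma design_t_lagrange_diagonal:
  assumes "t \<noteq> 0"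
  shows "design_t_lagrange t 1 \<bullet> regf (t * s, t * s) = (1 - s) * (1 + s - t * s)"
    "design_t_lagrange t 2 \<bullet> regf (t * s, t * s) = t * s * (1 - s) / 2"
    "design_t_lagrange t 3 \<bullet> regf (t * s, t * s) = t * s * (1 - s) / 2"
    "design_t_lagrange t 4 \<bullet> regf (t * s, t * s) = s^2"
  using assms
  by (simp_all add: design_t_lagrange_def regf_def inner_vec_def sum_4 field_simps power2_eq_square)

lemma sensitivity_design_t_diagonal:
  assumes "t \<noteq> 0"
  shows "sensitivity \<rho> (design_t t) (t * s, t * s)
       = ((1 - s) * (1 + s - t * s))^2 / intensity \<rho> (0, 0)
         + (t * s * (1 - s) / 2)^2 / intensity \<rho> (2, 0)
         + (t * s * (1 - s) / 2)^2 / intensity \<rho> (0, 2)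
         + s^4 / intensity \<rho> (t, t)
         - 1 / intensity \<rho> (t * s, t * s)"
proof -
  have "sensitivity \<rho> (design_t t) (t * s, t * s)
      = (\<Sum>i\<in>UNIV. (design_t_lagrange t i \<bullet> regf (t * s, t * s))^2
            / (1/4 * intensity \<rho> (design_t_points t i))) / 4 - 1 / intensity \<rho> (t * s, t * s)"
    unfolding design_t_eq
    by (rule sensitivity_saturated_design[OF design_t_lagrange_dual[OF assms]]) simp
  then show ?thesis
    by (simp add: sum_4 design_t_lagrange_diagonal[OF assms] design_t_points_def power_mult_distrib
        flip: power_mult)
qed

lemma t_rho_pos:
  assumes "0 \<le> \<rho>"
  shows "0 < t_rho \<rho>"
  using assms by (auto simp: t_rho_def real_less_rsqrt)

lemma t_rho_root:
  assumes "0 \<le> \<rho>"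
  shows "\<rho> * t_rho \<rho> ^ 2 + t_rho \<rho> = 2"
proof (cases "\<rho> = 0")
  case False
  with assms have "0 < \<rho>"
    by simp
  define w where "w = sqrt (1 + 8 * \<rho>)"
  have "w^2 = 1 + 8 * \<rho>"
    using \<open>0 < \<rho>\<close> by (simp add: w_def)
  have "\<rho> * ((w - 1) / (2 * \<rho>))^2 + (w - 1) / (2 * \<rho>) = (w^2 - 1) / (4 * \<rho>)"
    using \<open>0 < \<rho>\<close> by (simp add: field_simps power2_eq_square)
  also have "\<dots> = 2"
    using \<open>w^2 = 1 + 8 * \<rho>\<close> \<open>0 < \<rho>\<close> by simp
  finally show ?thesis
    using \<open>0 < \<rho>\<close> by (simp add: t_rho_def w_def)
qed (simp add: t_rho_def)

lemma inverse_intensity: "inverse (intensity \<rho> (a, b)) = exp (a + b + \<rho> * a * b)"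
  by (simp add: intensity_def flip: exp_minus)

lemma sensitivity_design_t_diagonal_exp:
  fixes \<rho> t s :: real
  assumes "0 < t" and root: "\<rho> * t^2 + t = 2"
  shows "sensitivity \<rho> (design_t t) (t * s, t * s)
       = ((1 - s) * (1 + s - t * s))^2 + exp 2 * (t * s * (1 - s))^2 / 2 + exp (t + 2) * s^4
         - exp ((2 - t) * s^2 + 2 * t * s)"
proof -
  have rt: "\<rho> * t * t = 2 - t"
    using root by (simp add: power2_eq_square algebra_simps)
  then have "inverse (intensity \<rho> (t, t)) = exp (t + 2)"
    unfolding inverse_intensity by simp
  moreover have "inverse (intensity \<rho> (t * s, t * s)) = exp ((2 - t) * s^2 + 2 * t * s)"
  proof -
    have "\<rho> * (t * s) * (t * s) = (\<rho> * t * t) * s^2"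
      by (simp add: power2_eq_square mult_ac)
    then show ?thesis
      unfolding inverse_intensity rt by (simp add: algebra_simps)
  qed
  ultimately show ?thesis
    using \<open>0 < t\<close>
    by (simp add: sensitivity_design_t_diagonal divide_inverse_commute[of _ "intensity _ _"]
        inverse_intensity[of \<rho> 0 0] inverse_intensity[of \<rho> 2 0] inverse_intensity[of \<rho> 0 2]
        power_mult_distrib power_divide)
qed

lemma exp_ge_taylor_cubic: "1 + u + u^2/2 + u^3/6 \<le> exp (u::real)"
proof -
  obtain \<eta> where "exp u = (\<Sum>m<4. u^m / fact m) + exp \<eta> / fact 4 * u^4"
    using Maclaurin_exp_le[of u 4] by blast
  moreover have "(\<Sum>m<4. u^m / fact m) = 1 + u + u^2/2 + u^3/6"
    by (simp add: eval_nat_numeral fact_numeral)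
  moreover have "0 \<le> exp \<eta> / fact 4 * u^4"
    by simp
  ultimately show ?thesis
    by linarith
qed

lemma exp_le_chord:
  fixes t b :: real
  assumes "0 \<le> t" "t \<le> b" "0 < b"
  shows "exp t \<le> 1 + t * (exp b - 1) / b"
proof -
  have "exp t = exp ((1 - t/b) *\<^sub>R 0 + (t/b) *\<^sub>R b)"
    using assms by simp
  also have "\<dots> \<le> (1 - t/b) * exp 0 + (t/b) * exp b"
    using assms by (intro convex_onD[OF exp_convex]) auto
  also have "\<dots> = 1 + t * (exp b - 1) / b"
    using assms by (simp add: field_simps)
  finally show ?thesis .
qed

lemma exp_2_bounds: "7 \<le> exp (2::real)" "exp (2::real) \<le> 37/5"
proof -
  have e: "27/10 \<le> exp (1::real)" "exp (1::real) \<le> 272/100"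
    using e_approx_32 e_less_272 unfolding abs_le_iff by simp_all
  have "exp (2::real) = exp 1 * exp 1"
    by (simp flip: exp_add)
  moreover have "27/10 * (27/10) \<le> exp (1::real) * exp 1"
    and "exp (1::real) * exp 1 \<le> 272/100 * (272/100)"
    using e by (intro mult_mono; simp)+
  ultimately show "7 \<le> exp (2::real)" "exp (2::real) \<le> 37/5"
    by linarith+
qed

lemma power4_ge_tangent: "s^4 + 4 * s^3 * (w - s) \<le> (w::real)^4"
proof -
  have "w^4 - (s^4 + 4 * s^3 * (w - s)) = (w - s)^2 * ((w + s)^2 + 2 * s^2)"
    by (simp add: algebra_simps power2_eq_square power3_eq_cube power4_eq_xxxx)
  moreover have "0 \<le> (w - s)^2 * ((w + s)^2 + 2 * s^2)"
    by simp
  ultimately show ?thesis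
    by linarith
qed

lemma exp_four_shift_lower:
  fixes s :: real
  assumes "0 \<le> s"
  shows "s^4 + 2/3 * (2 + s) * s^3 * (s - 1)^2 \<le> exp (4 * (s - 1))"
proof -
  define w where "w = exp (s - 1)"
  have "1 + (s - 1) + (s - 1)^2/2 + (s - 1)^3/6 = s + (s - 1)^2 * (2 + s) / 6"
    by (simp add: field_simps power2_eq_square power3_eq_cube)
  then have gap: "(s - 1)^2 * (2 + s) / 6 \<le> w - s"
    using exp_ge_taylor_cubic[of "s - 1"] unfolding w_def by linarith
  have "s^4 + 2/3 * (2 + s) * s^3 * (s - 1)^2 = s^4 + 4 * s^3 * ((s - 1)^2 * (2 + s) / 6)"
    by (simp add: field_simps)
  also have "\<dots> \<le> s^4 + 4 * s^3 * (w - s)"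
    using mult_left_mono[OF gap, of "4 * s^3"] assms by simp
  also have "\<dots> \<le> w^4"
    by (rule power4_ge_tangent)
  also have "\<dots> = exp (4 * (s - 1))"
    unfolding w_def by (simp flip: exp_of_nat_mult)
  finally show ?thesis .
qed

lemma small_s_polynomial_bound:
  fixes s t \<phi> :: real
  assumes s: "0 \<le> s" "s \<le> 1/2" and t: "0 \<le> t" "t \<le> 2"
    and \<phi>: "\<phi> = (2 - t) * s^2 + 2 * t * s"
  shows "((1 - s) * (1 + s - t * s))^2 + 37/5 * (t * s * (1 - s))^2 / 2
      + 37/5 * (1 + 16/5 * t) * s^4
    \<le> 1 + \<phi> + \<phi>^2/2 + \<phi>^3/6"
proof -
  have "1 + \<phi> + \<phi>^2/2 + \<phi>^3/6
      - (((1 - s) * (1 + s - t * s))^2 + 37/5 * (t * s * (1 - s))^2 / 2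
          + 37/5 * (1 + 16/5 * t) * s^4)
     = s * ((1 - 2 * s)^5 * t * (2 - t)^2
          + 2 * (1 - 2 * s)^5 * t^2 * (2 - t)
          + (1 - 2 * s)^5 * t^3
          + 1/2 * s * (1 - 2 * s)^4 * (2 - t)^3
          + 43/4 * s * (1 - 2 * s)^4 * t * (2 - t)^2
          + 373/20 * s * (1 - 2 * s)^4 * t^2 * (2 - t)
          + 42/5 * s * (1 - 2 * s)^4 * t^3
          + 4 * s^2 * (1 - 2 * s)^3 * (2 - t)^3
          + 93/2 * s^2 * (1 - 2 * s)^3 * t * (2 - t)^2
          + 739/10 * s^2 * (1 - 2 * s)^3 * t^2 * (2 - t)
          + 491/15 * s^2 * (1 - 2 * s)^3 * t^3
          + 56/5 * s^3 * (1 - 2 * s)^2 * (2 - t)^3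
          + 2317/25 * s^3 * (1 - 2 * s)^2 * t * (2 - t)^2
          + 7073/50 * s^3 * (1 - 2 * s)^2 * t^2 * (2 - t)
          + 3299/50 * s^3 * (1 - 2 * s)^2 * t^3
          + 64/5 * s^4 * (1 - 2 * s) * (2 - t)^3
          + 1943/25 * s^4 * (1 - 2 * s) * t * (2 - t)^2
          + 2896/25 * s^4 * (1 - 2 * s) * t^2 * (2 - t)
          + 1498/25 * s^4 * (1 - 2 * s) * t^3
          + 149/30 * s^5 * (2 - t)^3
          + 418/25 * s^5 * t * (2 - t)^2
          + 566/25 * s^5 * t^2 * (2 - t)
          + 1154/75 * s^5 * t^3)"
    (is "_ = ?certificate")
    unfolding \<phi> by (simp add: field_simps power2_eq_square power3_eq_cube power_numeral_reduce)
  moreover have "0 \<le> ?certificate"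
    using s t by (intro mult_nonneg_nonneg add_nonneg_nonneg zero_le_power) auto
  ultimately show ?thesis
    by linarith
qed

lemma large_s_polynomial_bound:
  fixes s t :: real
  assumes s: "1/2 \<le> s" and t: "0 \<le> t" "t \<le> 2"
  shows "t^2 * s^2 / 2 + (1 + s - t * s)^2 / 7
    \<le> (1 + t + t^2/2 + t^3/6) * (2/3 * (2 + s) * s^3 + (2 - t) * s^4)"
proof -
  have "(1 + t + t^2/2 + t^3/6) * (2/3 * (2 + s) * s^3 + (2 - t) * s^4)
      - (t^2 * s^2 / 2 + (1 + s - t * s)^2 / 7)
     = 1/1344 * (2 - t)^4
       + 57/896 * t * (2 - t)^3
       + 463/2688 * t^2 * (2 - t)^2
       + 1361/8064 * t^3 * (2 - t)
       + 395/8064 * t^4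
       + 5/42 * (s - 1/2) * (2 - t)^4
       + 87/112 * (s - 1/2) * t * (2 - t)^3
       + 545/336 * (s - 1/2) * t^2 * (2 - t)^2
       + 1471/1008 * (s - 1/2) * t^3 * (2 - t)
       + 415/1008 * (s - 1/2) * t^4
       + 41/112 * (s - 1/2)^2 * (2 - t)^4
       + 33/16 * (s - 1/2)^2 * t * (2 - t)^3
       + 471/112 * (s - 1/2)^2 * t^2 * (2 - t)^2
       + 61/16 * (s - 1/2)^2 * t^3 * (2 - t)
       + 59/56 * (s - 1/2)^2 * t^4
       + 5/12 * (s - 1/2)^3 * (2 - t)^4
       + 9/4 * (s - 1/2)^3 * t * (2 - t)^3
       + 55/12 * (s - 1/2)^3 * t^2 * (2 - t)^2
       + 149/36 * (s - 1/2)^3 * t^3 * (2 - t)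
       + 19/18 * (s - 1/2)^3 * t^4
       + 1/6 * (s - 1/2)^4 * (2 - t)^4
       + 7/8 * (s - 1/2)^4 * t * (2 - t)^3
       + 41/24 * (s - 1/2)^4 * t^2 * (2 - t)^2
       + 103/72 * (s - 1/2)^4 * t^3 * (2 - t)
       + 19/72 * (s - 1/2)^4 * t^4"
    (is "_ = ?certificate")
    by (simp add: field_simps power2_eq_square power3_eq_cube power_numeral_reduce)
  moreover have "0 \<le> ?certificate"
    using s t by (intro mult_nonneg_nonneg add_nonneg_nonneg zero_le_power) auto
  ultimately show ?thesis
    by linarith
qed

lemma diagonal_inequality_small_s:
  fixes s t :: real
  assumes s: "0 \<le> s" "s \<le> 1/2" and t: "0 \<le> t" "t \<le> 2"
  shows "((1 - s) * (1 + s - t * s))^2 + exp 2 * (t * s * (1 - s))^2 / 2 + exp (t + 2) * s^4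
    \<le> exp ((2 - t) * s^2 + 2 * t * s)"
proof -
  have "exp (t + 2) \<le> 37/5 * (1 + 16/5 * t)"
  proof -
    have chord: "1 + t * (exp 2 - 1) / 2 \<le> 1 + 16/5 * t"
      using mult_left_mono[of "exp 2 - 1" "32/5" t] exp_2_bounds t by simp
    have "exp (t + 2) = exp 2 * exp t"
      by (simp add: exp_add)
    also have "\<dots> \<le> exp 2 * (1 + t * (exp 2 - 1) / 2)"
      using exp_le_chord[of t 2] t by simp
    also have "\<dots> \<le> 37/5 * (1 + 16/5 * t)"
      using exp_2_bounds chord t by (intro mult_mono) auto
    finally show ?thesis .
  qed
  then have "exp (t + 2) * s^4 \<le> 37/5 * (1 + 16/5 * t) * s^4"
    by (rule mult_right_mono) simp
  moreover have "exp 2 * (t * s * (1 - s))^2 / 2 \<le> 37/5 * (t * s * (1 - s))^2 / 2"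
    using exp_2_bounds by (intro divide_right_mono mult_right_mono) auto
  moreover note small_s_polynomial_bound[OF s t refl]
    exp_ge_taylor_cubic[of "(2 - t) * s^2 + 2 * t * s"]
  ultimately show ?thesis
    by linarith
qed

lemma large_s_bracket_bound:
  fixes s t :: real
  assumes s: "1/2 \<le> s" and t: "0 \<le> t" "t \<le> 2"
  shows "(1 + s - t * s)^2 + exp 2 * (t * s)^2 / 2
    \<le> exp (t + 2) * (2/3 * (2 + s) * s^3 + (2 - t) * s^4)"
proof -
  define L where "L = 2/3 * (2 + s) * s^3 + (2 - t) * s^4"
  have "0 \<le> L"
    using s t unfolding L_def by simp
  have "(1 + s - t * s)^2 \<le> exp 2 * ((1 + s - t * s)^2 / 7)"
    using mult_right_mono[OF exp_2_bounds(1), of "(1 + s - t * s)^2"] by simp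
  then have "(1 + s - t * s)^2 + exp 2 * (t * s)^2 / 2
      \<le> exp 2 * (t^2 * s^2 / 2 + (1 + s - t * s)^2 / 7)"
    by (simp add: algebra_simps power_mult_distrib)
  also have "\<dots> \<le> exp 2 * ((1 + t + t^2/2 + t^3/6) * L)"
    using large_s_polynomial_bound[OF s t] unfolding L_def by (simp add: mult_left_mono)
  also have "\<dots> \<le> exp 2 * (exp t * L)"
    using exp_ge_taylor_cubic[of t] \<open>0 \<le> L\<close> by (simp add: mult_left_mono mult_right_mono)
  also have "\<dots> = exp (t + 2) * L"
    by (simp add: exp_add)
  finally show ?thesis
    unfolding L_def .
qed

lemma diagonal_inequality_large_s:
  fixes s t :: real
  assumes s: "1/2 \<le> s" and t: "0 \<le> t" "t \<le> 2"
  shows "((1 - s) * (1 + s - t * s))^2 + exp 2 * (t * s * (1 - s))^2 / 2 + exp (t + 2) * s^4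
    \<le> exp ((2 - t) * s^2 + 2 * t * s)"
proof -
  define u where "u = s - 1"
  define P where "P = 2/3 * (2 + s) * s^3"
  have "0 \<le> u^2 * P"
    using s unfolding P_def by simp
  have shift: "s^4 + u^2 * P \<le> exp (4 * u)"
    using exp_four_shift_lower[of s] s unfolding u_def P_def by (simp add: mult_ac)
  have "((1 - s) * (1 + s - t * s))^2 + exp 2 * (t * s * (1 - s))^2 / 2 + exp (t + 2) * s^4
      = u^2 * ((1 + s - t * s)^2 + exp 2 * (t * s)^2 / 2) + exp (t + 2) * s^4"
    unfolding u_def by (simp add: algebra_simps power2_eq_square)
  also have "\<dots> \<le> u^2 * (exp (t + 2) * (P + (2 - t) * s^4)) + exp (t + 2) * s^4"
    using large_s_bracket_bound[OF s t] unfolding P_def by (simp add: mult_left_mono)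
  also have "\<dots> = exp (t + 2) * ((s^4 + u^2 * P) + (2 - t) * u^2 * s^4)"
    by (simp add: algebra_simps)
  also have "\<dots> \<le> exp (t + 2) * (exp (4 * u) + (2 - t) * u^2 * exp (4 * u))"
    using shift \<open>0 \<le> u^2 * P\<close> t
    by (intro mult_left_mono add_mono) auto
  also have "\<dots> = exp (t + 2) * exp (4 * u) * (1 + (2 - t) * u^2)"
    by (simp add: algebra_simps)
  also have "\<dots> \<le> exp (t + 2) * exp (4 * u) * exp ((2 - t) * u^2)"
    by (intro mult_left_mono exp_ge_add_one_self) simp
  also have "\<dots> = exp ((2 - t) * s^2 + 2 * t * s)"
    unfolding u_def by (simp flip: exp_add add: algebra_simps power2_eq_square)
  finally show ?thesis .
qed

lemma diagonal_inequality:
  fixes s t :: real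
  assumes "0 \<le> s" "0 \<le> t" "t \<le> 2"
  shows "((1 - s) * (1 + s - t * s))^2 + exp 2 * (t * s * (1 - s))^2 / 2 + exp (t + 2) * s^4
    \<le> exp ((2 - t) * s^2 + 2 * t * s)"
  using assms diagonal_inequality_small_s[of s t] diagonal_inequality_large_s[of s t]
  by (cases "s \<le> 1/2") auto

theorem lemma4:
  fixes \<rho> x :: real
  assumes "\<rho> \<ge> 0" and "x \<ge> 0"
  shows "sensitivity \<rho> (design_t (t_rho \<rho>)) (x, x) \<le> 0"
proof -
  define t where "t = t_rho \<rho>"
  have "0 < t" and root: "\<rho> * t^2 + t = 2"
    using t_rho_pos t_rho_root assms(1) unfolding t_def by auto
  moreover have "0 \<le> \<rho> * t^2"
    using assms(1) by simp
  ultimately have "t \<le> 2"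
    by linarith
  define s where "s = x / t"
  have x: "x = t * s" and "0 \<le> s"
    using \<open>0 < t\<close> assms(2) unfolding s_def by simp_all
  have "sensitivity \<rho> (design_t t) (t * s, t * s)
      = ((1 - s) * (1 + s - t * s))^2 + exp 2 * (t * s * (1 - s))^2 / 2 + exp (t + 2) * s^4
        - exp ((2 - t) * s^2 + 2 * t * s)"
    using \<open>0 < t\<close> root by (rule sensitivity_design_t_diagonal_exp)
  also have "\<dots> \<le> 0"
    using diagonal_inequality[OF \<open>0 \<le> s\<close> _ \<open>t \<le> 2\<close>] \<open>0 < t\<close> by simp
  finally show ?thesis
    unfolding x t_def .
qed

end
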